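(* If $\psi\in LFD$ is satisfiable (in some dependence model at some assignment) and $|V_\psi|=k$, then there is a dependence model $\mathbb{M}=(M,A)$ for the vocabulary $(V_\psi,\tau_\psi)$ such that $M$ is a $k$-tree of finite branching degree and $\mathbb{M},s\models\psi$ for some $s\in A$.
   Context: The language $LFD[V,\tau]$ is generated by $\varphi::=P\mathbf{x}\mid\neg\varphi\mid\varphi\wedge\varphi\mid\mathbb{D}_X\varphi\mid D_Xy$, with $X\subseteq V$ finite, $y\in V$, $P\in\tau$, $\mathbf{x}\in V^{ar(P)}$. $V_\psi$ is the set of variables occurring in $\psi$ and $\tau_\psi$ the set of predicates occurring in $\psi$. A dependence model is a pair $\mathbb{M}=(M,A)$ with $M$ a $\tau$-structure with domain $O$ and $A\subseteq O^V$. Semantics at $s\in A$: $s\models P\mathbf{x}$ iff $s(\mathbf{x})\in P^M$; Booleans as usual; $s\models\mathbb{D}_X\varphi$ iff $t\models\varphi$ for all $t\in A$ with $s\restriction X=t\restriction X$; $s\models D_Xy$ iff for all $t\in A$, $s\restriction X=t\restriction X$ implies $s(y)=t(y)$. A tuple $\mathbf{a}=(a_1,\dots,a_r)$ from $M$ is live if $M\models P\mathbf{a}$ for some $r$-ary $P\in\tau$. $M$ is a $k$-tree if there is a tree (acyclic connected graph) $T=(N,E)$ and a map $F$ assigning to each node a subset of the domain of $M$ of size at most $k$ such that (i) for every live tuple $\mathbf{a}$ there is a node $u$ with $\{a_1,\dots,a_r\}\subseteq F(u)$, and (ii) for every element $a$ the set $\{u\mid a\in F(u)\}$ is connected in $T$.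 $M$ has finite branching degree if $T$ can be chosen so that every node has finitely many neighbours. *)

theory Defs
  imports "HOL-Library.FuncSet"
begin

text \<open>Variables of type 'v, predicate symbols of type 'p. The finite set X in
  D_X and the dependence atom is given as a list (hence finite).\<close>

datatype ('v, 'p) lfd =
    Pred 'p "'v list"
  | Neg "('v, 'p) lfd"
  | Conj "('v, 'p) lfd" "('v, 'p) lfd"
  | Dall "'v list" "('v, 'p) lfd"
  | Dep "'v list" 'v

fun vars :: "('v, 'p) lfd \<Rightarrow> 'v set" where
  "vars (Pred P xs) = set xs"
| "vars (Neg \<phi>) = vars \<phi>"
| "vars (Conj \<phi> \<chi>) = vars \<phi> \<union> vars \<chi>"
| "vars (Dall X \<phi>) = set X \<union> vars \<phi>"
| "vars (Dep X y) = insert y (set X)"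

fun preds :: "('v, 'p) lfd \<Rightarrow> 'p set" where
  "preds (Pred P xs) = {P}"
| "preds (Neg \<phi>) = preds \<phi>"
| "preds (Conj \<phi> \<chi>) = preds \<phi> \<union> preds \<chi>"
| "preds (Dall X \<phi>) = preds \<phi>"
| "preds (Dep X y) = {}"

fun wf_lfd :: "('p \<Rightarrow> nat) \<Rightarrow> ('v, 'p) lfd \<Rightarrow> bool" where
  "wf_lfd ar (Pred P xs) = (length xs = ar P)"
| "wf_lfd ar (Neg \<phi>) = wf_lfd ar \<phi>"
| "wf_lfd ar (Conj \<phi> \<chi>) = (wf_lfd ar \<phi> \<and> wf_lfd ar \<chi>)"
| "wf_lfd ar (Dall X \<phi>) = wf_lfd ar \<phi>"
| "wf_lfd ar (Dep X y) = True"

definition tau_structure :: "('p \<Rightarrow> nat) \<Rightarrow> 'p set \<Rightarrow> 'a set \<Rightarrow> ('p \<Rightarrow> 'a list set) \<Rightarrow> bool" where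
  "tau_structure ar \<tau> Dom I \<longleftrightarrow> Dom \<noteq> {} \<and>
     (\<forall>P\<in>\<tau>. \<forall>as\<in>I P. length as = ar P \<and> set as \<subseteq> Dom) \<and>
     (\<forall>P. P \<notin> \<tau> \<longrightarrow> I P = {})"

definition dep_model ::
  "('p \<Rightarrow> nat) \<Rightarrow> 'v set \<Rightarrow> 'p set \<Rightarrow> 'a set \<Rightarrow> ('p \<Rightarrow> 'a list set) \<Rightarrow> ('v \<Rightarrow> 'a) set \<Rightarrow> bool" where
  "dep_model ar V \<tau> Dom I A \<longleftrightarrow> tau_structure ar \<tau> Dom I \<and> A \<subseteq> (V \<rightarrow>\<^sub>E Dom)"

fun sat :: "('v \<Rightarrow> 'a) set \<Rightarrow> ('p \<Rightarrow> 'a list set) \<Rightarrow> ('v \<Rightarrow> 'a) \<Rightarrow> ('v, 'p) lfd \<Rightarrow> bool" where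
  "sat A I s (Pred P xs) = (map s xs \<in> I P)"
| "sat A I s (Neg \<phi>) = (\<not> sat A I s \<phi>)"
| "sat A I s (Conj \<phi> \<chi>) = (sat A I s \<phi> \<and> sat A I s \<chi>)"
| "sat A I s (Dall X \<phi>) = (\<forall>t\<in>A. (\<forall>x\<in>set X. s x = t x) \<longrightarrow> sat A I t \<phi>)"
| "sat A I s (Dep X y) = (\<forall>t\<in>A. (\<forall>x\<in>set X. s x = t x) \<longrightarrow> s y = t y)"

text \<open>Undirected graphs on node sets N (nodes are natural numbers; a finitely
  branching tree is countable) with symmetric irreflexive edge relation E.\<close>

definition connected_in :: "(nat \<Rightarrow> nat \<Rightarrow> bool) \<Rightarrow> nat set \<Rightarrow> bool" where
  "connected_in E S \<longleftrightarrow>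
     (\<forall>u\<in>S. \<forall>v\<in>S. (\<lambda>x y. E x y \<and> x \<in> S \<and> y \<in> S)\<^sup>*\<^sup>* u v)"

definition has_cycle :: "(nat \<Rightarrow> nat \<Rightarrow> bool) \<Rightarrow> bool" where
  "has_cycle E \<longleftrightarrow> (\<exists>cs. length cs \<ge> 3 \<and> distinct cs \<and>
     (\<forall>i < length cs. E (cs ! i) (cs ! (Suc i mod length cs))))"

definition is_tree :: "nat set \<Rightarrow> (nat \<Rightarrow> nat \<Rightarrow> bool) \<Rightarrow> bool" where
  "is_tree N E \<longleftrightarrow> N \<noteq> {} \<and>
     (\<forall>u v. E u v \<longrightarrow> u \<in> N \<and> v \<in> N \<and> u \<noteq> v \<and> E v u) \<and>
     connected_in E N \<and> \<not> has_cycle E"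

definition live :: "'p set \<Rightarrow> ('p \<Rightarrow> 'a list set) \<Rightarrow> 'a list \<Rightarrow> bool" where
  "live \<tau> I as \<longleftrightarrow> (\<exists>P\<in>\<tau>. as \<in> I P)"

definition k_tree_fb :: "nat \<Rightarrow> 'p set \<Rightarrow> 'a set \<Rightarrow> ('p \<Rightarrow> 'a list set) \<Rightarrow> bool" where
  "k_tree_fb k \<tau> Dom I \<longleftrightarrow> (\<exists>(N :: nat set) E (F :: nat \<Rightarrow> 'a set).
     is_tree N E \<and>
     (\<forall>u\<in>N. finite {v \<in> N. E u v}) \<and>
     (\<forall>u\<in>N. F u \<subseteq> Dom \<and> finite (F u) \<and> card (F u) \<le> k) \<and>
     (\<forall>as. live \<tau> I as \<longrightarrow> (\<exists>u\<in>N. set as \<subseteq> F u)) \<and>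
     (\<forall>a\<in>Dom. connected_in E {u \<in> N. a \<in> F u}))"

end

theory Submission
  imports Defs "HOL-Library.Nat_Bijection"
begin

text \<open>Unravel the model along the subformulas of \<open>\<psi>\<close>. A node of the tree is a finite
  sequence of subformula indices, read as a sequence of moves from the given assignment: the move
  for \<open>Dall X \<phi>\<close> or \<open>Dep X y\<close> jumps, if that formula fails, to a refuting assignment that
  agrees on \<open>X\<close>, and otherwise stays put. In the new model each variable \<open>x\<close> receives at a
  node a fresh copy of its value, tagged with the last node of the branch where the move did not
  keep \<open>x\<close> fixed (its origin). A node carries the at most \<open>k\<close> copies current there, and the
  nodes sharing a copy form a subtree. Agreement of origins on \<open>X\<close> forces agreement on \<open>y\<close>
  whenever \<open>Dep X y\<close> holds, since the moves keep \<open>X\<close> and dependence is transitive; this makes the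
  truth lemma go through.\<close>

definition list_tree_edge :: "nat list set \<Rightarrow> nat \<Rightarrow> nat \<Rightarrow> bool" where
  "list_tree_edge Q u v \<longleftrightarrow> list_decode u \<in> Q \<and> list_decode v \<in> Q \<and>
     ((\<exists>i. list_decode v = i # list_decode u) \<or> (\<exists>i. list_decode u = i # list_decode v))"

lemma mem_list_encode_image_iff: "u \<in> list_encode ` Q \<longleftrightarrow> list_decode u \<in> Q"
  by (metis image_iff list_decode_inverse list_encode_inverse)

lemma list_tree_edge_sym: "list_tree_edge Q u v \<Longrightarrow> list_tree_edge Q v u"
  unfolding list_tree_edge_def by blast

lemma list_tree_edge_Cons:
  "i # \<rho> \<in> Q \<Longrightarrow> \<rho> \<in> Q \<Longrightarrow> list_tree_edge Q (list_encode \<rho>) (list_encode (i # \<rho>))"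
  unfolding list_tree_edge_def by simp

lemma list_tree_edge_neighbours_finite:
  assumes "Q \<subseteq> lists {..<n}"
  shows "finite {v. list_tree_edge Q u v}"
proof (rule finite_subset)
  show "{v. list_tree_edge Q u v} \<subseteq>
      list_encode ` insert (tl (list_decode u)) ((\<lambda>i. i # list_decode u) ` {..<n})"
  proof
    fix v assume "v \<in> {v. list_tree_edge Q u v}"
    then consider i where "list_decode v = i # list_decode u" "i # list_decode u \<in> Q"
      | i where "list_decode u = i # list_decode v"
      unfolding list_tree_edge_def by force
    then show "v \<in> list_encode ` insert (tl (list_decode u)) ((\<lambda>i. i # list_decode u) ` {..<n})"
    proof cases
      case 1
      then have "i < n" using assms by auto
      then show ?thesis using 1 by (metis image_eqI insertI2 lessThan_iff list_decode_inverse)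
    next
      case 2
      then show ?thesis by (metis image_eqI insertI1 list.sel(3) list_decode_inverse)
    qed
  qed
qed simp

text \<open>In a cycle, the vertex encoding the longest list has two distinct neighbours, which
  must both encode its tail.\<close>

lemma list_tree_edge_acyclic: "\<not> has_cycle (list_tree_edge Q)"
proof
  assume "has_cycle (list_tree_edge Q)"
  then obtain cs where n3: "length cs \<ge> 3" and d: "distinct cs"
    and e: "\<forall>i < length cs. list_tree_edge Q (cs ! i) (cs ! (Suc i mod length cs))"
    unfolding has_cycle_def by blast
  define n where "n = length cs"
  define L where "L j = length (list_decode (cs ! j))" for j
  obtain j where j: "j < n" and L_j: "L j = Max (L ` {..<n})"
    using Max_in[of "L ` {..<n}"] n3 unfolding n_def by fastforce
  have longest: "L j' \<le> L j" if "j' < n" for j'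
    using that L_j by simp
  have tl_of_neighbour: "list_decode (cs ! j') = tl (list_decode (cs ! j))"
    if "j' < n" and "list_tree_edge Q (cs ! j) (cs ! j')" for j'
  proof -
    from that(2) consider i where "list_decode (cs ! j') = i # list_decode (cs ! j)"
      | i where "list_decode (cs ! j) = i # list_decode (cs ! j')"
      unfolding list_tree_edge_def by blast
    then show ?thesis
    proof cases
      case 1
      then have "L j' > L j" unfolding L_def by simp
      then show ?thesis using longest[OF that(1)] by simp
    qed simp
  qed
  define q where "q = Suc j mod n"
  define p where "p = (if j = 0 then n - 1 else j - 1)"
  have q: "q < n" and p: "p < n" "Suc p mod n = j"
    using j n3 unfolding q_def p_def n_def by (auto intro: mod_less_divisor)
  have "list_tree_edge Q (cs ! j) (cs ! q)" "list_tree_edge Q (cs ! j) (cs ! p)"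
    using e j p list_tree_edge_sym unfolding q_def n_def by metis+
  then have "cs ! q = cs ! p"
    using tl_of_neighbour q p(1) by (metis list_decode_inverse)
  then have "q = p" using d q p(1) unfolding n_def by (simp add: nth_eq_iff_index_eq)
  then show False using p(2) j n3 unfolding q_def p_def n_def
    by (cases "j = 0"; cases "Suc j = length cs") (auto simp: mod_Suc split: if_splits)
qed

lemma connected_in_list_tree_edge:
  assumes "r \<in> S" and "S \<subseteq> Q"
    and descend: "\<And>\<rho>. \<rho> \<in> S \<Longrightarrow> \<rho> \<noteq> r \<Longrightarrow> \<rho> \<noteq> [] \<and> tl \<rho> \<in> S"
  shows "connected_in (list_tree_edge Q) (list_encode ` S)"
proof -
  let ?R = "\<lambda>u v. list_tree_edge Q u v \<and> u \<in> list_encode ` S \<and> v \<in> list_encode ` S"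
  have from_root: "?R\<^sup>*\<^sup>* (list_encode r) (list_encode \<rho>)" if "\<rho> \<in> S" for \<rho>
    using that
  proof (induction \<rho>)
    case Nil
    then show ?case using descend by fastforce
  next
    case (Cons i \<rho>)
    show ?case
    proof (cases "i # \<rho> = r")
      case False
      then have "\<rho> \<in> S" using descend Cons.prems by fastforce
      then have "?R (list_encode \<rho>) (list_encode (i # \<rho>))"
        using Cons.prems \<open>S \<subseteq> Q\<close> list_tree_edge_Cons by blast
      with Cons.IH[OF \<open>\<rho> \<in> S\<close>] show ?thesis by (rule rtranclp.rtrancl_into_rtrancl)
    qed simp
  qed
  have "symp ?R" by (auto intro: sympI list_tree_edge_sym)
  then have "symp ?R\<^sup>*\<^sup>*" by (rule symp_rtranclp)
  then show ?thesis
    unfolding connected_in_def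
    by (auto intro: rtranclp_trans from_root dest: sympD)
qed

lemma is_tree_list_tree_edge:
  assumes "[] \<in> Q" and "\<And>i \<rho>. i # \<rho> \<in> Q \<Longrightarrow> \<rho> \<in> Q"
  shows "is_tree (list_encode ` Q) (list_tree_edge Q)"
  unfolding is_tree_def
proof (intro conjI allI impI)
  show "connected_in (list_tree_edge Q) (list_encode ` Q)"
    by (rule connected_in_list_tree_edge[OF assms(1) subset_refl])
      (use assms(2) in \<open>metis list.collapse\<close>)
qed (use assms(1) list_tree_edge_acyclic in
      \<open>auto simp: list_tree_edge_def mem_list_encode_image_iff\<close>)

fun subformulas :: "('v, 'p) lfd \<Rightarrow> ('v, 'p) lfd list" where
  "subformulas (Pred P xs) = [Pred P xs]"
| "subformulas (Neg \<phi>) = Neg \<phi> # subformulas \<phi>"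
| "subformulas (Conj \<phi> \<chi>) = Conj \<phi> \<chi> # subformulas \<phi> @ subformulas \<chi>"
| "subformulas (Dall X \<phi>) = Dall X \<phi> # subformulas \<phi>"
| "subformulas (Dep X y) = [Dep X y]"

lemma finite_vars: "finite (vars \<phi>)"
  by (induct \<phi>) auto

fun cond_vars :: "('v, 'p) lfd \<Rightarrow> 'v list" where
  "cond_vars (Dall X \<phi>) = X"
| "cond_vars (Dep X y) = X"
| "cond_vars _ = []"

fun refutes :: "('v \<Rightarrow> 'a) set \<Rightarrow> ('p \<Rightarrow> 'a list set) \<Rightarrow> ('v, 'p) lfd \<Rightarrow>
    ('v \<Rightarrow> 'a) \<Rightarrow> ('v \<Rightarrow> 'a) \<Rightarrow> bool" where
  "refutes A I (Dall X \<phi>) s t \<longleftrightarrow> (\<forall>x\<in>set X. s x = t x) \<and> \<not> sat A I t \<phi>"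
| "refutes A I (Dep X y) s t \<longleftrightarrow> (\<forall>x\<in>set X. s x = t x) \<and> t y \<noteq> s y"
| "refutes A I _ s t \<longleftrightarrow> False"

lemma refutes_agree_cond_vars: "refutes A I \<phi> s t \<Longrightarrow> \<forall>x\<in>set (cond_vars \<phi>). s x = t x"
  by (cases \<phi>) auto

lemma sat_Dep_transfer:
  "t \<in> A \<Longrightarrow> \<forall>x\<in>set X. s x = t x \<Longrightarrow> sat A I s (Dep X y) \<Longrightarrow> sat A I t (Dep X y)"
  by simp metis

locale unravelling =
  fixes A :: "('v \<Rightarrow> 'a) set" and I :: "'p \<Rightarrow> 'a list set" and s0 :: "'v \<Rightarrow> 'a"
    and items :: "('v, 'p) lfd list"
  assumes s0_in_A: "s0 \<in> A"
begin

definition step :: "('v \<Rightarrow> 'a) \<Rightarrow> nat \<Rightarrow> 'v \<Rightarrow> 'a" where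
  "step s i = (if \<exists>t\<in>A. refutes A I (items ! i) s t
     then SOME t. t \<in> A \<and> refutes A I (items ! i) s t else s)"

lemma step_props:
  assumes "s \<in> A"
  shows step_in_A: "step s i \<in> A"
    and step_agree: "\<forall>x\<in>set (cond_vars (items ! i)). step s i x = s x"
    and step_refutes: "\<exists>t\<in>A. refutes A I (items ! i) s t \<Longrightarrow> refutes A I (items ! i) s (step s i)"
proof -
  have refuting: "step s i \<in> A \<and> refutes A I (items ! i) s (step s i)"
    if "\<exists>t\<in>A. refutes A I (items ! i) s t"
  proof -
    have "\<exists>t. t \<in> A \<and> refutes A I (items ! i) s t" using that by blast
    then have "(SOME t. t \<in> A \<and> refutes A I (items ! i) s t) \<in> A \<and>
        refutes A I (items ! i) s (SOME t. t \<in> A \<and> refutes A I (items ! i) s t)"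
      by (rule someI_ex)
    then show ?thesis using that by (simp add: step_def)
  qed
  have idle: "step s i = s" if "\<not> (\<exists>t\<in>A. refutes A I (items ! i) s t)"
    using that unfolding step_def by simp
  show "step s i \<in> A" using refuting idle assms by metis
  show "\<exists>t\<in>A. refutes A I (items ! i) s t \<Longrightarrow> refutes A I (items ! i) s (step s i)"
    using refuting by blast
  show "\<forall>x\<in>set (cond_vars (items ! i)). step s i x = s x"
  proof (cases "\<exists>t\<in>A. refutes A I (items ! i) s t")
    case True
    then show ?thesis using refuting refutes_agree_cond_vars by metis
  qed (use idle in simp)
qed

text \<open>Paths are read right to left: \<open>i # \<pi>\<close> extends \<open>\<pi>\<close> by the step for the \<open>i\<close>-th item.
  The step agrees with its source on \<open>cond_vars\<close>, so it cannot change a variable that is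
  determined by them; \<open>kept\<close> records this, and the origin moves only at steps that do not
  keep the variable.\<close>

fun run :: "nat list \<Rightarrow> 'v \<Rightarrow> 'a" where
  "run [] = s0"
| "run (i # \<pi>) = step (run \<pi>) i"

definition kept :: "nat list \<Rightarrow> nat \<Rightarrow> 'v \<Rightarrow> bool" where
  "kept \<pi> i z \<longleftrightarrow> sat A I (run \<pi>) (Dep (cond_vars (items ! i)) z)"

fun origin :: "'v \<Rightarrow> nat list \<Rightarrow> nat list" where
  "origin x [] = []"
| "origin x (i # \<pi>) = (if kept \<pi> i x then origin x \<pi> else i # \<pi>)"

lemma run_in_A: "run \<pi> \<in> A"
  by (induct \<pi>) (auto simp: s0_in_A step_in_A)

lemma run_Cons_kept:
  assumes "kept \<pi> i z"
  shows "run (i # \<pi>) z = run \<pi> z"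
proof -
  have "step (run \<pi>) i \<in> A" "\<forall>x\<in>set (cond_vars (items ! i)). run \<pi> x = step (run \<pi>) i x"
    using step_in_A step_agree run_in_A by auto
  then show ?thesis using assms unfolding kept_def by simp
qed

lemma run_origin: "run (origin x \<pi>) x = run \<pi> x"
  by (induct \<pi>) (auto simp: run_Cons_kept simp del: run.simps)

lemma origin_suffix: "\<exists>zs. \<pi> = zs @ origin x \<pi>"
  by (induct \<pi>) (auto, metis append_Cons)

lemma origin_origin: "origin x (origin x \<pi>) = origin x \<pi>"
  by (induct \<pi>) auto

lemma kept_cond_vars: "x \<in> set (cond_vars (items ! i)) \<Longrightarrow> kept \<pi> i x"
  unfolding kept_def by simp

lemma kept_trans:
  assumes "\<forall>x\<in>set X. kept \<rho> i x" and "sat A I (run \<rho>) (Dep X y)"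
  shows "kept \<rho> i y"
  using assms unfolding kept_def by simp

text \<open>If the last step of \<open>i # \<rho>\<close> did not keep \<open>x\<close>, then \<open>i # \<rho>\<close> itself would be the
  origin of \<open>x\<close> along \<open>b\<close>, hence a suffix of \<open>b\<close>.\<close>

lemma kept_if_origin_eq_shorter:
  assumes "origin x (i # \<rho>) = origin x b" and "length b \<le> length (i # \<rho>)" and "b \<noteq> i # \<rho>"
  shows "kept \<rho> i x"
proof (rule ccontr)
  assume "\<not> kept \<rho> i x"
  then have "origin x b = i # \<rho>" using assms(1) by simp
  then obtain zs where "b = zs @ i # \<rho>" using origin_suffix[of b x] by metis
  then show False using assms(2,3) by simp
qed

text \<open>Induction on the total length: the last step of the longer path keeps \<open>X\<close>, hence also
  \<open>y\<close> by transitivity of dependence.\<close>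

lemma origin_determined:
  assumes "\<forall>x\<in>set X. origin x \<pi> = origin x \<pi>'" and "sat A I (run \<pi>) (Dep X y)"
  shows "origin y \<pi> = origin y \<pi>'"
  using assms
proof (induction "length \<pi> + length \<pi>'" arbitrary: \<pi> \<pi>' rule: less_induct)
  case less
  have longer: "origin y a = origin y b"
    if len: "length b \<le> length a" and "a \<noteq> b" and sum: "length a + length b = length \<pi> + length \<pi>'"
      and agree: "\<forall>x\<in>set X. origin x a = origin x b" and dep: "sat A I (run a) (Dep X y)" for a b
  proof -
    obtain i \<rho> where a: "a = i # \<rho>" using len \<open>a \<noteq> b\<close> by (cases a) auto
    have kept_X: "\<forall>x\<in>set X. kept \<rho> i x"
      using kept_if_origin_eq_shorter agree len \<open>a \<noteq> b\<close> a by blast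
    then have "\<forall>x\<in>set X. run \<rho> x = run a x" using a run_Cons_kept by simp
    then have dep_\<rho>: "sat A I (run \<rho>) (Dep X y)"
      using sat_Dep_transfer[OF run_in_A _ dep] by (metis (no_types, lifting))
    have "\<forall>x\<in>set X. origin x \<rho> = origin x b" using kept_X agree a by simp
    then have "origin y \<rho> = origin y b" using less.hyps[of \<rho> b] sum a dep_\<rho> by simp
    moreover have "kept \<rho> i y" using kept_trans[OF kept_X dep_\<rho>] .
    ultimately show ?thesis using a by simp
  qed
  show ?case
  proof (cases "\<pi> = \<pi>'")
    case False
    have "\<forall>x\<in>set X. run \<pi> x = run \<pi>' x"
      using less.prems(1) run_origin by metis
    then have "sat A I (run \<pi>') (Dep X y)"
      using sat_Dep_transfer[OF run_in_A _ less.prems(2)] by blast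
    then show ?thesis using longer[of \<pi>' \<pi>] longer[of \<pi> \<pi>'] False less.prems by fastforce
  qed simp
qed

end

locale unravelled_model = unravelling A I s0 items
  for A :: "('v \<Rightarrow> 'a) set" and I :: "'p \<Rightarrow> 'a list set" and s0 and items +
  fixes Vs :: "'v set" and Ps :: "'p set" and code :: "'v \<Rightarrow> nat"
  assumes inj_code: "inj_on code Vs"
begin

definition paths :: "nat list set" where
  "paths = lists {..<length items}"

text \<open>The new domain has to consist of lists over \<open>'a\<close>, so the copy of \<open>x\<close> created at
  \<open>origin x \<pi>\<close> is encoded by the length of a list. The extra element \<open>[]\<close> of \<open>unr_dom\<close> keeps
  the domain nonempty when \<open>Vs = {}\<close>.\<close>

definition copy :: "nat list \<Rightarrow> 'v \<Rightarrow> 'a list" where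
  "copy \<pi> x = replicate (Suc (prod_encode (code x, list_encode (origin x \<pi>)))) undefined"

definition unr_asg :: "nat list \<Rightarrow> 'v \<Rightarrow> 'a list" where
  "unr_asg \<pi> = (\<lambda>x. if x \<in> Vs then copy \<pi> x else undefined)"

definition unr_asgs :: "('v \<Rightarrow> 'a list) set" where
  "unr_asgs = unr_asg ` paths"

definition unr_interp :: "'p \<Rightarrow> 'a list list set" where
  "unr_interp P = (if P \<in> Ps then
     {map (unr_asg \<pi>) xs | \<pi> xs. \<pi> \<in> paths \<and> set xs \<subseteq> Vs \<and> map (run \<pi>) xs \<in> I P} else {})"

definition unr_dom :: "'a list set" where
  "unr_dom = insert [] {copy \<pi> x | \<pi> x. \<pi> \<in> paths \<and> x \<in> Vs}"

definition bag :: "nat \<Rightarrow> 'a list set" where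
  "bag u = copy (list_decode u) ` Vs"

lemma paths_Cons_iff: "i # \<pi> \<in> paths \<longleftrightarrow> i < length items \<and> \<pi> \<in> paths"
  by (simp add: paths_def)

lemma origin_in_paths: "\<pi> \<in> paths \<Longrightarrow> origin x \<pi> \<in> paths"
  using origin_suffix[of \<pi> x] unfolding paths_def by (metis append_in_lists_conv)

lemma copy_eq_iff:
  assumes "x \<in> Vs" and "y \<in> Vs"
  shows "copy \<pi> x = copy \<pi>' y \<longleftrightarrow> x = y \<and> origin x \<pi> = origin y \<pi>'"
proof
  assume "copy \<pi> x = copy \<pi>' y"
  then have "length (copy \<pi> x) = length (copy \<pi>' y)" by simp
  then have "code x = code y \<and> origin x \<pi> = origin y \<pi>'"
    unfolding copy_def by (simp add: list_encode_eq)
  then show "x = y \<and> origin x \<pi> = origin y \<pi>'" using inj_code assms by (auto dest: inj_onD)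
qed (auto simp: copy_def)

lemma unr_asg_eq_iff: "x \<in> Vs \<Longrightarrow> unr_asg \<pi> x = unr_asg \<pi>' x \<longleftrightarrow> origin x \<pi> = origin x \<pi>'"
  unfolding unr_asg_def using copy_eq_iff by simp

lemma run_eq_if_unr_asg_eq:
  "x \<in> Vs \<Longrightarrow> y \<in> Vs \<Longrightarrow> unr_asg \<pi> x = unr_asg \<pi>' y \<Longrightarrow> run \<pi> x = run \<pi>' y"
  unfolding unr_asg_def using copy_eq_iff run_origin by metis

lemma map_run_eq_if_map_unr_asg_eq:
  "set xs \<subseteq> Vs \<Longrightarrow> set ys \<subseteq> Vs \<Longrightarrow> map (unr_asg \<pi>) xs = map (unr_asg \<pi>') ys \<Longrightarrow>
    map (run \<pi>) xs = map (run \<pi>') ys"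
proof (induction xs arbitrary: ys)
  case (Cons x xs)
  then show ?case using run_eq_if_unr_asg_eq by (cases ys) auto
qed simp

lemma unr_asg_Cons_cond_vars:
  "x \<in> set (cond_vars (items ! i)) \<Longrightarrow> unr_asg (i # \<pi>) x = unr_asg \<pi> x"
  unfolding unr_asg_def copy_def using kept_cond_vars by simp

lemma sat_unr_Pred_iff:
  assumes "P \<in> Ps" and "set xs \<subseteq> Vs" and "\<pi> \<in> paths"
  shows "sat unr_asgs unr_interp (unr_asg \<pi>) (Pred P xs) \<longleftrightarrow> sat A I (run \<pi>) (Pred P xs)"
proof
  assume "sat unr_asgs unr_interp (unr_asg \<pi>) (Pred P xs)"
  then obtain \<pi>' ys where eq: "map (unr_asg \<pi>) xs = map (unr_asg \<pi>') ys"
    and ys: "set ys \<subseteq> Vs" and "map (run \<pi>') ys \<in> I P"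
    using assms(1) by (auto simp: unr_interp_def)
  then show "sat A I (run \<pi>) (Pred P xs)"
    using map_run_eq_if_map_unr_asg_eq[OF assms(2) ys eq] by simp
qed (use assms in \<open>auto simp: unr_interp_def\<close>)

lemma refuting_step:
  assumes "i < length items" and "\<pi> \<in> paths" and "\<exists>t\<in>A. refutes A I (items ! i) (run \<pi>) t"
  shows "unr_asg (i # \<pi>) \<in> unr_asgs"
    and "\<forall>x\<in>set (cond_vars (items ! i)). unr_asg \<pi> x = unr_asg (i # \<pi>) x"
    and "refutes A I (items ! i) (run \<pi>) (run (i # \<pi>))"
  using assms step_refutes[OF run_in_A] unr_asg_Cons_cond_vars
  by (auto simp: unr_asgs_def paths_Cons_iff)

lemma sat_unr_Dall_iff:
  assumes "Dall X \<phi> \<in> set items" and "set X \<subseteq> Vs" and "\<pi> \<in> paths"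
    and IH: "\<And>\<pi>. \<pi> \<in> paths \<Longrightarrow> sat unr_asgs unr_interp (unr_asg \<pi>) \<phi> \<longleftrightarrow> sat A I (run \<pi>) \<phi>"
  shows "sat unr_asgs unr_interp (unr_asg \<pi>) (Dall X \<phi>) \<longleftrightarrow> sat A I (run \<pi>) (Dall X \<phi>)"
proof
  obtain i where i: "i < length items" "items ! i = Dall X \<phi>"
    using assms(1) by (auto simp: in_set_conv_nth)
  assume unr: "sat unr_asgs unr_interp (unr_asg \<pi>) (Dall X \<phi>)"
  show "sat A I (run \<pi>) (Dall X \<phi>)"
  proof (rule ccontr)
    assume "\<not> sat A I (run \<pi>) (Dall X \<phi>)"
    then have "\<exists>t\<in>A. refutes A I (items ! i) (run \<pi>) t" using i by auto
    note step = refuting_step[OF i(1) \<open>\<pi> \<in> paths\<close> this]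
    have "sat unr_asgs unr_interp (unr_asg (i # \<pi>)) \<phi>" using unr step(1,2) i by simp
    moreover have "i # \<pi> \<in> paths" using i \<open>\<pi> \<in> paths\<close> by (simp add: paths_Cons_iff)
    ultimately have "sat A I (run (i # \<pi>)) \<phi>" using IH by blast
    then show False using step(3) i by simp
  qed
next
  assume sat_\<pi>: "sat A I (run \<pi>) (Dall X \<phi>)"
  show "sat unr_asgs unr_interp (unr_asg \<pi>) (Dall X \<phi>)"
  proof (simp only: sat.simps, intro ballI impI)
    fix t assume "t \<in> unr_asgs" and agree: "\<forall>x\<in>set X. unr_asg \<pi> x = t x"
    then obtain \<pi>' where \<pi>': "\<pi>' \<in> paths" "t = unr_asg \<pi>'" by (auto simp: unr_asgs_def)
    then have "\<forall>x\<in>set X. run \<pi> x = run \<pi>' x"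
      using agree assms(2) run_eq_if_unr_asg_eq by blast
    then have "sat A I (run \<pi>') \<phi>" using sat_\<pi> run_in_A by simp
    then show "sat unr_asgs unr_interp t \<phi>" using IH \<pi>' by simp
  qed
qed

lemma sat_unr_Dep_iff:
  assumes "Dep X y \<in> set items" and "set X \<subseteq> Vs" and "y \<in> Vs" and "\<pi> \<in> paths"
  shows "sat unr_asgs unr_interp (unr_asg \<pi>) (Dep X y) \<longleftrightarrow> sat A I (run \<pi>) (Dep X y)"
proof
  obtain i where i: "i < length items" "items ! i = Dep X y"
    using assms(1) by (auto simp: in_set_conv_nth)
  assume unr: "sat unr_asgs unr_interp (unr_asg \<pi>) (Dep X y)"
  show "sat A I (run \<pi>) (Dep X y)"
  proof (rule ccontr)
    assume "\<not> sat A I (run \<pi>) (Dep X y)"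
    then have "\<exists>t\<in>A. refutes A I (items ! i) (run \<pi>) t" using i by auto
    note step = refuting_step[OF i(1) \<open>\<pi> \<in> paths\<close> this]
    have "unr_asg \<pi> y = unr_asg (i # \<pi>) y" using unr step(1,2) i by simp
    then have "run \<pi> y = run (i # \<pi>) y" using run_eq_if_unr_asg_eq assms(3) by blast
    then show False using step(3) i by simp
  qed
next
  assume sat_\<pi>: "sat A I (run \<pi>) (Dep X y)"
  show "sat unr_asgs unr_interp (unr_asg \<pi>) (Dep X y)"
  proof (simp only: sat.simps, intro ballI impI)
    fix t assume "t \<in> unr_asgs" and agree: "\<forall>x\<in>set X. unr_asg \<pi> x = t x"
    then obtain \<pi>' where \<pi>': "\<pi>' \<in> paths" "t = unr_asg \<pi>'" by (auto simp: unr_asgs_def)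
    then have "\<forall>x\<in>set X. origin x \<pi> = origin x \<pi>'" using agree assms(2) unr_asg_eq_iff by blast
    then have "origin y \<pi> = origin y \<pi>'" using sat_\<pi> origin_determined by blast
    then show "unr_asg \<pi> y = t y" using assms(3) unr_asg_eq_iff \<pi>' by simp
  qed
qed

lemma sat_unr_iff:
  "set (subformulas \<phi>) \<subseteq> set items \<Longrightarrow> vars \<phi> \<subseteq> Vs \<Longrightarrow> preds \<phi> \<subseteq> Ps \<Longrightarrow> \<pi> \<in> paths \<Longrightarrow>
    sat unr_asgs unr_interp (unr_asg \<pi>) \<phi> \<longleftrightarrow> sat A I (run \<pi>) \<phi>"
proof (induction \<phi> arbitrary: \<pi>)
  case (Pred P xs)
  then show ?case by (intro sat_unr_Pred_iff) auto
next
  case (Dall X \<phi>)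
  then show ?case by (intro sat_unr_Dall_iff) auto
next
  case (Dep X y)
  then show ?case by (intro sat_unr_Dep_iff) auto
qed simp_all

lemma dep_model_unravelled:
  assumes "tau_structure ar \<tau> Dom I" and "Ps \<subseteq> \<tau>"
  shows "dep_model ar Vs Ps unr_dom unr_interp unr_asgs"
  unfolding dep_model_def tau_structure_def
proof (intro conjI ballI allI impI)
  fix P as assume "P \<in> Ps" and "as \<in> unr_interp P"
  then obtain \<pi> xs where as: "as = map (unr_asg \<pi>) xs" and "\<pi> \<in> paths" "set xs \<subseteq> Vs"
    and "map (run \<pi>) xs \<in> I P"
    unfolding unr_interp_def by auto
  moreover have "P \<in> \<tau>" using \<open>P \<in> Ps\<close> assms(2) by blast
  ultimately show "length as = ar P" and "set as \<subseteq> unr_dom"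
    using assms(1) unfolding tau_structure_def by (force simp: unr_dom_def unr_asg_def)+
next
  show "unr_asgs \<subseteq> Vs \<rightarrow>\<^sub>E unr_dom"
    by (auto simp: unr_asgs_def unr_asg_def unr_dom_def) blast
qed (auto simp: unr_dom_def unr_interp_def)

lemma bags_containing_copy:
  assumes "x \<in> Vs"
  shows "{u \<in> list_encode ` paths. copy \<pi> x \<in> bag u} =
    list_encode ` {\<rho> \<in> paths. origin x \<rho> = origin x \<pi>}"
  using assms copy_eq_iff by (auto simp: bag_def intro!: image_eqI[where x=x])

lemma connected_in_origin_class:
  assumes "\<pi> \<in> paths"
  shows "connected_in (list_tree_edge paths) (list_encode ` {\<rho> \<in> paths. origin x \<rho> = origin x \<pi>})"
proof (rule connected_in_list_tree_edge)
  show "origin x \<pi> \<in> {\<rho> \<in> paths. origin x \<rho> = origin x \<pi>}"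
    using assms origin_in_paths origin_origin by simp
  fix \<rho> assume \<rho>: "\<rho> \<in> {\<rho> \<in> paths. origin x \<rho> = origin x \<pi>}" and "\<rho> \<noteq> origin x \<pi>"
  then obtain i \<rho>' where "\<rho> = i # \<rho>'" "kept \<rho>' i x"
    by (cases \<rho>) (auto split: if_splits)
  then show "\<rho> \<noteq> [] \<and> tl \<rho> \<in> {\<rho> \<in> paths. origin x \<rho> = origin x \<pi>}"
    using \<rho> by (simp add: paths_Cons_iff)
qed auto

lemma k_tree_fb_unravelled:
  assumes "finite Vs"
  shows "k_tree_fb (card Vs) Ps unr_dom unr_interp"
  unfolding k_tree_fb_def
proof (intro exI conjI)
  show "is_tree (list_encode ` paths) (list_tree_edge paths)"
    by (rule is_tree_list_tree_edge) (auto simp: paths_def)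
  show "\<forall>u\<in>list_encode ` paths. finite {v \<in> list_encode ` paths. list_tree_edge paths u v}"
    using list_tree_edge_neighbours_finite[of paths "length items"]
    by (auto simp: paths_def intro: finite_subset)
  show "\<forall>u\<in>list_encode ` paths. bag u \<subseteq> unr_dom \<and> finite (bag u) \<and> card (bag u) \<le> card Vs"
    using assms by (auto simp: bag_def unr_dom_def intro: card_image_le)
  show "\<forall>as. live Ps unr_interp as \<longrightarrow> (\<exists>u\<in>list_encode ` paths. set as \<subseteq> bag u)"
  proof (intro allI impI)
    fix as assume "live Ps unr_interp as"
    then obtain \<pi> xs where "as = map (unr_asg \<pi>) xs" "\<pi> \<in> paths" "set xs \<subseteq> Vs"
      unfolding live_def unr_interp_def by (auto split: if_splits)
    then have "set as \<subseteq> bag (list_encode \<pi>)" by (auto simp: bag_def unr_asg_def)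
    then show "\<exists>u\<in>list_encode ` paths. set as \<subseteq> bag u" using \<open>\<pi> \<in> paths\<close> by blast
  qed
  show "\<forall>a\<in>unr_dom. connected_in (list_tree_edge paths) {u \<in> list_encode ` paths. a \<in> bag u}"
  proof
    fix a assume "a \<in> unr_dom"
    then consider "a = []" | \<pi> x where "a = copy \<pi> x" "\<pi> \<in> paths" "x \<in> Vs"
      unfolding unr_dom_def by blast
    then show "connected_in (list_tree_edge paths) {u \<in> list_encode ` paths. a \<in> bag u}"
    proof cases
      case 1
      then have "{u \<in> list_encode ` paths. a \<in> bag u} = {}" by (auto simp: bag_def copy_def)
      then show ?thesis unfolding connected_in_def by (simp only:) blast
    next
      case 2
      then show ?thesis using bags_containing_copy connected_in_origin_class by simp
    qed
  qed
qed

end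

theorem corollary2p1:
  fixes \<psi> :: "('v, 'p) lfd" and ar :: "'p \<Rightarrow> nat" and k :: nat
    and V :: "'v set" and \<tau> :: "'p set" and Dom :: "'a set"
    and I :: "'p \<Rightarrow> 'a list set" and A :: "('v \<Rightarrow> 'a) set" and s :: "'v \<Rightarrow> 'a"
  assumes "wf_lfd ar \<psi>"
    and "dep_model ar V \<tau> Dom I A" and "vars \<psi> \<subseteq> V" and "preds \<psi> \<subseteq> \<tau>"
    and "s \<in> A" and "sat A I s \<psi>"
    and "card (vars \<psi>) = k"
  shows "\<exists>(Dom' :: 'a list set) I' A'.
           dep_model ar (vars \<psi>) (preds \<psi>) Dom' I' A' \<and>
           k_tree_fb k (preds \<psi>) Dom' I' \<and>
           (\<exists>s'\<in>A'. sat A' I' s' \<psi>)"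
proof -
  have fin: "finite (vars \<psi>)" by (rule finite_vars)
  obtain code :: "'v \<Rightarrow> nat" where "inj_on code (vars \<psi>)"
    using finite_imp_inj_to_nat_seg[OF fin] by blast
  then interpret U: unravelled_model A I s "subformulas \<psi>" "vars \<psi>" "preds \<psi>" code
    using \<open>s \<in> A\<close> by unfold_locales
  have root: "[] \<in> U.paths" by (simp add: U.paths_def)
  have "dep_model ar (vars \<psi>) (preds \<psi>) U.unr_dom U.unr_interp U.unr_asgs"
    using assms(2,4) by (intro U.dep_model_unravelled) (auto simp: dep_model_def)
  moreover have "k_tree_fb k (preds \<psi>) U.unr_dom U.unr_interp"
    using U.k_tree_fb_unravelled[OF fin] assms(7) by simp
  moreover have "sat U.unr_asgs U.unr_interp (U.unr_asg []) \<psi>"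
    using U.sat_unr_iff[of \<psi> "[]"] root assms(6) by simp
  moreover have "U.unr_asg [] \<in> U.unr_asgs" using root by (simp add: U.unr_asgs_def)
  ultimately show ?thesis by blast
qed

end
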